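(* Let $A\in\mathbb{R}^{D\times D}$ be real symmetric, $\hat A_1,\hat A_2,\dots$ mutually independent random $D\times D$ matrices with $\mathbb{E}[\hat A_j]=A$, and $\hat T_0=I$, $\hat T_1=\hat A_1$, $\hat T_k=2\hat A_k\hat T_{k-1}-\hat T_{k-2}$ ($k\ge2$). Suppose $4\,\mathbb{E}[\|\hat A_k\|^2]+2\,\mathbb{E}[\|\hat A_k\|]+1\le\alpha$ for all $k\ge1$. Fix $\lambda'\in(-1,1)$ and $\kappa>0$, and draw $k\sim q(\lambda',\kappa)$ independently of $(\hat A_j)_j$. Then $$\mathbb{E}\left[\left\|\frac{\gamma_k(\lambda',\kappa)}{q_k(\lambda',\kappa)}\hat T_k\right\|_F^2\right]\le\frac{D\,e^{\kappa}}{\pi^2I_0(\kappa)}\left(1+\frac{2e^{\kappa}}{I_0(\kappa)}\Big(e^{\alpha\kappa/2}-1\Big)\right).$$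
   Context: $I_\eta(\kappa)$ is the modified Bessel function of the first kind; $\|\cdot\|$ is the spectral norm and $\|\cdot\|_F$ the Frobenius norm. The von Mises kernel Chebyshev coefficients are $\gamma_0(\lambda',\kappa)=1/\pi$ and $\gamma_k(\lambda',\kappa)=\frac{2}{\pi}\frac{I_k(\kappa)}{I_0(\kappa)}\cos(k\arccos\lambda')$ for $k\ge1$. The proposal distribution $q(\lambda',\kappa)$ on $\mathbb{N}_0$ is $q_0(\lambda',\kappa)=1/\mathcal{Z}(\lambda',\kappa)$ and $q_k(\lambda',\kappa)=\frac{2}{\mathcal{Z}(\lambda',\kappa)}\frac{I_k(\kappa)}{I_0(\kappa)}|\cos(k\arccos\lambda')|$ for $k\ge1$, where $\mathcal{Z}(\lambda',\kappa)=1+\frac{2}{I_0(\kappa)}\sum_{k\ge1}I_k(\kappa)|\cos(k\arccos\lambda')|$. Indices $k$ with $q_k=0$ (equivalently $\gamma_k=0$) are never drawn. *)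

theory Defs
  imports "HOL-Probability.Probability"
begin

definition besselI :: "nat \<Rightarrow> real \<Rightarrow> real" where
  "besselI k x = (\<Sum>m. (x / 2) ^ (2 * m + k) / (fact m * fact (m + k)))"

definition vm_gamma :: "real \<Rightarrow> real \<Rightarrow> nat \<Rightarrow> real" where
  "vm_gamma l \<kappa> k = (if k = 0 then 1 / pi
     else 2 / pi * (besselI k \<kappa> / besselI 0 \<kappa>) * cos (real k * arccos l))"

definition vm_Z :: "real \<Rightarrow> real \<Rightarrow> real" where
  "vm_Z l \<kappa> = 1 + 2 / besselI 0 \<kappa> *
     (\<Sum>k. besselI (Suc k) \<kappa> * \<bar>cos (real (Suc k) * arccos l)\<bar>)"

definition vm_q :: "real \<Rightarrow> real \<Rightarrow> nat \<Rightarrow> real" where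
  "vm_q l \<kappa> k = (if k = 0 then 1 / vm_Z l \<kappa>
     else 2 / vm_Z l \<kappa> * (besselI k \<kappa> / besselI 0 \<kappa>) * \<bar>cos (real k * arccos l)\<bar>)"

fun chebT :: "(nat \<Rightarrow> real^'n^'n) \<Rightarrow> nat \<Rightarrow> real^'n^'n" where
  "chebT B 0 = mat 1"
| "chebT B (Suc 0) = B 1"
| "chebT B (Suc (Suc k)) = 2 *\<^sub>R (B (k + 2) ** chebT B (Suc k)) - chebT B k"

definition spec_norm :: "real^'n^'n \<Rightarrow> real" where
  "spec_norm B = onorm (\<lambda>x. B *v x)"

definition frob_norm :: "real^'n^'n \<Rightarrow> real" where
  "frob_norm B = sqrt (\<Sum>i\<in>UNIV. \<Sum>j\<in>UNIV. (B $ i $ j)^2)"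

end

theory Submission
  imports Defs
begin

text \<open>
  Since \<open>K\<close> is independent of the matrices, the left-hand side is \<open>\<Sum>k. \<gamma>_k^2 / q_k * m_k\<close>
  with \<open>m_k = E ||T_k||_F^2\<close>. The recursion, \<open>||B C||_F \<le> ||B|| ||C||_F\<close>, \<open>2 a b \<le> a^2 + b^2\<close> and
  the independence of \<open>A_k\<close> from \<open>T_(k-1)\<close> and \<open>T_(k-2)\<close> give
  \<open>m_k \<le> 4 E||A_k||^2 m_(k-1) + 2 E||A_k|| (m_(k-1) + m_(k-2)) + m_(k-2)\<close>, hence \<open>m_k \<le> D \<alpha>^k\<close>.
  On the other side \<open>\<gamma>_0^2 / q_0 = Z / \<pi>^2\<close> and \<open>\<gamma>_k^2 / q_k \<le> 2 Z / \<pi>^2 * (\<kappa>/2)^k / k!\<close>, because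
  \<open>I_k(\<kappa>) \<le> (\<kappa>/2)^k / k! * I_0(\<kappa>)\<close>, while \<open>Z \<le> e^\<kappa> / I_0(\<kappa>)\<close> follows from
  \<open>I_0 + 2 \<Sum>k\<ge>1. I_k \<le> e^\<kappa>\<close>. Summing the exponential series gives the bound.
\<close>

lemma power2_norm_vec: "(norm (x::'a::real_normed_vector^'n))^2 = (\<Sum>i\<in>UNIV. (norm (x$i))^2)"
  by (simp add: norm_vec_def L2_set_def sum_nonneg)

lemma power2_norm_matrix: "(norm (X::real^'n^'m))^2 = (\<Sum>i\<in>UNIV. \<Sum>j\<in>UNIV. (X$i$j)^2)"
  by (simp add: power2_norm_vec)

lemma power2_norm_matrix_columns: "(norm (X::real^'n^'m))^2 = (\<Sum>j\<in>UNIV. (norm (column j X))^2)"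
proof -
  have "(\<Sum>i\<in>UNIV. \<Sum>j\<in>UNIV. (X$i$j)^2) = (\<Sum>j\<in>UNIV. \<Sum>i\<in>UNIV. (X$i$j)^2)"
    by (rule sum.swap)
  then show ?thesis
    by (simp add: power2_norm_matrix power2_norm_vec column_def)
qed

lemma frob_norm_eq_norm: "frob_norm B = norm B"
  unfolding frob_norm_def power2_norm_matrix[symmetric] by simp

lemma spec_norm_nonneg: "0 \<le> spec_norm B"
  unfolding spec_norm_def by (rule onorm_pos_le) simp

lemma norm_mult_vec_le_spec_norm: "norm (B *v v) \<le> spec_norm B * norm v"
  unfolding spec_norm_def by (rule onorm) simp

lemma norm_mult_vec_le_norm: "norm (B *v v) \<le> norm (B::real^'n^'m) * norm v"
proof -
  have "(norm (B *v v))^2 = (\<Sum>i\<in>UNIV. (B$i \<bullet> v)^2)"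
    by (simp add: power2_norm_vec matrix_mult_dot)
  also have "\<dots> \<le> (\<Sum>i\<in>UNIV. (norm (B$i) * norm v)^2)"
    by (intro sum_mono power2_le_iff_abs_le[THEN iffD2] Cauchy_Schwarz_ineq2) simp
  also have "\<dots> = (norm B * norm v)^2"
    by (simp add: power_mult_distrib power2_norm_vec[of B] sum_distrib_right)
  finally show ?thesis
    by (rule power2_le_imp_le) simp
qed

lemma spec_norm_le_norm: "spec_norm B \<le> norm B"
  unfolding spec_norm_def by (rule onorm_le) (rule norm_mult_vec_le_norm)

lemma spec_norm_triangle: "spec_norm B \<le> spec_norm (B - C) + spec_norm C"
proof -
  have "onorm (\<lambda>x. (B - C) *v x + C *v x) \<le> onorm (\<lambda>x. (B - C) *v x) + onorm (\<lambda>x. C *v x)"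
    by (rule onorm_triangle) simp_all
  then show ?thesis
    by (simp add: spec_norm_def matrix_vector_mult_diff_rdistrib)
qed

lemma abs_spec_norm_diff_le: "\<bar>spec_norm B - spec_norm C\<bar> \<le> norm (B - C)"
  using spec_norm_triangle[of B C] spec_norm_triangle[of C B]
    spec_norm_le_norm[of "B - C"] spec_norm_le_norm[of "C - B"] norm_minus_commute[of C B]
  by linarith

lemma borel_measurable_spec_norm[measurable]: "spec_norm \<in> borel_measurable borel"
proof (rule borel_measurable_continuous_onI)
  have "1-lipschitz_on UNIV (spec_norm :: real^'n^'n \<Rightarrow> real)"
    by (rule lipschitz_onI) (auto simp: dist_real_def dist_norm abs_spec_norm_diff_le)
  then show "continuous_on UNIV (spec_norm :: real^'n^'n \<Rightarrow> real)"
    by (rule lipschitz_on_continuous_on)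
qed

lemma column_matrix_mult: "column j (B ** C) = B *v column j C"
  by (simp add: column_def matrix_matrix_mult_def matrix_vector_mult_def vec_eq_iff)

lemma norm_matrix_mult_le_spec_norm: "norm (B ** C) \<le> spec_norm B * norm (C::real^'n^'n)"
proof -
  have "(norm (B ** C))^2 = (\<Sum>j\<in>UNIV. (norm (B *v column j C))^2)"
    by (simp add: power2_norm_matrix_columns column_matrix_mult)
  also have "\<dots> \<le> (\<Sum>j\<in>UNIV. (spec_norm B * norm (column j C))^2)"
    by (intro sum_mono power_mono norm_mult_vec_le_spec_norm) simp
  also have "\<dots> = (spec_norm B * norm C)^2"
    by (simp add: power_mult_distrib power2_norm_matrix_columns[of C] sum_distrib_left)
  finally show ?thesis
    by (rule power2_le_imp_le) (simp add: spec_norm_nonneg)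
qed

lemma power2_norm_mat_1: "(norm (mat 1 :: real^'n^'n))^2 = real CARD('n)"
proof -
  have "(\<Sum>j\<in>UNIV. ((mat 1::real^'n^'n)$i$j)^2) = 1" for i
    by (simp add: mat_def if_distrib[where f="\<lambda>x::real. x^2"] cong: if_cong)
  then show ?thesis
    by (simp add: power2_norm_matrix)
qed

lemma power2_norm_le_spec_norm: "(norm (B::real^'n^'n))^2 \<le> real CARD('n) * (spec_norm B)^2"
proof -
  have "norm B \<le> spec_norm B * norm (mat 1 :: real^'n^'n)"
    using norm_matrix_mult_le_spec_norm[of B "mat 1"] by simp
  then have "(norm B)^2 \<le> (spec_norm B * norm (mat 1 :: real^'n^'n))^2"
    by (intro power_mono) auto
  then show ?thesis
    by (simp add: power_mult_distrib power2_norm_mat_1 mult.commute)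
qed

lemma borel_measurable_matrix_mult[measurable]:
  fixes f g :: "'a \<Rightarrow> real^'n^'n"
  assumes "f \<in> borel_measurable N" "g \<in> borel_measurable N"
  shows "(\<lambda>x. f x ** g x) \<in> borel_measurable N"
proof (rule borel_measurable_continuous_Pair[OF assms])
  show "continuous_on UNIV (\<lambda>x::(real^'n^'n) \<times> (real^'n^'n). fst x ** snd x)"
    unfolding matrix_matrix_mult_def by (intro continuous_intros continuous_on_vec_lambda)
qed

lemma chebT_cong:
  assumes "\<And>j. 1 \<le> j \<Longrightarrow> j \<le> k \<Longrightarrow> B j = B' j"
  shows "chebT B k = chebT B' k"
  using assms by (induction B k rule: chebT.induct) auto

lemma chebT_restrict: "{1..k} \<subseteq> I \<Longrightarrow> chebT (restrict B I) k = chebT B k"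
  by (rule chebT_cong) auto

lemma borel_measurable_chebT[measurable]:
  assumes "\<And>j. 1 \<le> j \<Longrightarrow> j \<le> k \<Longrightarrow> (\<lambda>x. B x j) \<in> borel_measurable N"
  shows "(\<lambda>x. chebT (B x) k) \<in> borel_measurable N"
  using assms by (induction k rule: induct_nat_012) simp_all

text \<open>The cross term is split by \<open>2 a b \<le> a^2 + b^2\<close> so that every summand is a function of \<open>B (k + 2)\<close>
  times a squared norm of an earlier iterate, which is what independence lets us factor.\<close>

lemma power2_norm_chebT_Suc_Suc_le:
  fixes B :: "nat \<Rightarrow> real^'n^'n" and k :: nat
  defines "s \<equiv> spec_norm (B (k + 2))" and "a \<equiv> norm (chebT B (Suc k))" and "b \<equiv> norm (chebT B k)"
  shows "(norm (chebT B (Suc (Suc k))))^2 \<le> 4 * s^2 * a^2 + 2 * s * a^2 + 2 * s * b^2 + b^2"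
proof -
  have s: "0 \<le> s" by (simp add: s_def spec_norm_nonneg)
  have "norm (chebT B (Suc (Suc k))) \<le> norm (2 *\<^sub>R (B (k + 2) ** chebT B (Suc k))) + b"
    unfolding b_def by (simp only: chebT.simps) (rule norm_triangle_ineq4)
  also have "\<dots> \<le> 2 * s * a + b"
    using norm_matrix_mult_le_spec_norm[of "B (k + 2)" "chebT B (Suc k)"] by (simp add: s_def a_def)
  finally have "(norm (chebT B (Suc (Suc k))))^2 \<le> (2 * s * a + b)^2"
    by (rule power_mono) simp
  also have "\<dots> = 4 * s^2 * a^2 + 2 * s * (2 * a * b) + b^2"
    by (simp add: power2_eq_square algebra_simps)
  also have "\<dots> \<le> 4 * s^2 * a^2 + 2 * s * (a^2 + b^2) + b^2"
    using s by (intro add_mono order_refl mult_left_mono sum_squares_bound) simp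
  finally show ?thesis
    by (simp add: algebra_simps)
qed

lemma fact_mult_fact_le: "fact m * fact k \<le> (fact (m + k) :: real)"
proof -
  have "0 < (m + k) choose k"
    by simp
  then have "fact m * fact k \<le> fact m * fact k * ((m + k) choose k)"
    by (simp add: Suc_le_eq)
  also have "\<dots> = fact (m + k)"
    using binomial_fact_lemma[of k "m + k"] by (simp add: ac_simps)
  finally show ?thesis
    by (metis of_nat_fact of_nat_le_iff of_nat_mult)
qed

lemma exp_series: "(\<lambda>n. x ^ n / fact n) sums exp (x::real)"
  using exp_converges[of x] by (simp add: divide_inverse mult.commute)

lemma sum_exp_series_le: "0 \<le> x \<Longrightarrow> (\<Sum>n<N. x ^ n / fact n) \<le> exp (x::real)"
  using sum_le_suminf[OF sums_summable[OF exp_series]] sums_unique[OF exp_series] by fastforce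

definition besselI_term :: "nat \<Rightarrow> real \<Rightarrow> nat \<Rightarrow> real" where
  "besselI_term k x m = (x / 2) ^ (2 * m + k) / (fact m * fact (m + k))"

lemma besselI_eq_suminf: "besselI k x = (\<Sum>m. besselI_term k x m)"
  by (simp add: besselI_def besselI_term_def)

lemma besselI_term_nonneg: "0 \<le> x \<Longrightarrow> 0 \<le> besselI_term k x m"
  by (simp add: besselI_term_def)

lemma besselI_term_le:
  assumes "0 \<le> x"
  shows "besselI_term k x m \<le> (x / 2) ^ k / fact k * besselI_term 0 x m"
proof -
  have "besselI_term k x m \<le> (x / 2) ^ (2 * m + k) / (fact m * (fact m * fact k))"
    unfolding besselI_term_def using assms fact_mult_fact_le[of m k]
    by (intro divide_left_mono mult_left_mono mult_pos_pos) auto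
  also have "\<dots> = (x / 2) ^ k / fact k * besselI_term 0 x m"
    by (simp add: besselI_term_def power_add ac_simps)
  finally show ?thesis .
qed

lemma besselI_term_0_le: "besselI_term 0 x m \<le> ((x / 2)^2) ^ m / fact m"
proof -
  have "besselI_term 0 x m = ((x / 2)^2) ^ m / fact m / fact m"
    by (simp add: besselI_term_def power_mult)
  also have "\<dots> \<le> ((x / 2)^2) ^ m / fact m / 1"
    by (intro divide_left_mono) auto
  finally show ?thesis
    by simp
qed

lemma summable_besselI_term:
  assumes "0 \<le> x"
  shows "summable (besselI_term k x)"
proof (rule summable_comparison_test')
  show "summable (\<lambda>m. (x / 2) ^ k / fact k * (((x / 2)^2) ^ m / fact m))"
    by (intro summable_mult sums_summable[OF exp_series])
  show "norm (besselI_term k x m) \<le> (x / 2) ^ k / fact k * (((x / 2)^2) ^ m / fact m)" for m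
  proof -
    have "norm (besselI_term k x m) \<le> (x / 2) ^ k / fact k * besselI_term 0 x m"
      using assms besselI_term_le[OF assms] by (simp add: besselI_term_nonneg)
    also have "\<dots> \<le> (x / 2) ^ k / fact k * (((x / 2)^2) ^ m / fact m)"
      using assms by (intro mult_left_mono besselI_term_0_le) simp
    finally show ?thesis .
  qed
qed

lemma besselI_nonneg: "0 \<le> x \<Longrightarrow> 0 \<le> besselI k x"
  unfolding besselI_eq_suminf by (intro suminf_nonneg summable_besselI_term besselI_term_nonneg)

lemma one_le_besselI_0:
  assumes "0 \<le> x"
  shows "1 \<le> besselI 0 x"
proof -
  have "besselI_term 0 x 0 \<le> besselI 0 x"
    using sum_le_suminf[OF summable_besselI_term, of x "{0}" 0] assms
    by (simp add: besselI_eq_suminf besselI_term_nonneg)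
  then show ?thesis
    by (simp add: besselI_term_def)
qed

lemma besselI_le:
  assumes "0 \<le> x"
  shows "besselI k x \<le> (x / 2) ^ k / fact k * besselI 0 x"
  unfolding besselI_eq_suminf
  using suminf_le[OF besselI_term_le summable_besselI_term summable_mult[OF summable_besselI_term]]
    suminf_mult[OF summable_besselI_term] assms
  by metis

text \<open>The terms of \<open>besselI 0\<close> and those of \<open>besselI k\<close>, the latter taken twice as \<open>(m, m + k)\<close> and
  \<open>(m + k, m)\<close>, are disjoint parts of the double series \<open>\<Sum>a b. y^(a+b) / (a! b!) = exp y * exp y\<close>
  with \<open>y = x / 2\<close>.\<close>

lemma besselI_partial_sums_le_exp:
  assumes "0 \<le> x"
  shows "(\<Sum>m<M. besselI_term 0 x m) + (\<Sum>k<N. \<Sum>m<M. besselI_term (Suc k) x m)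
           + (\<Sum>k<N. \<Sum>m<M. besselI_term (Suc k) x m) \<le> exp x"
proof -
  define f where "f = (\<lambda>(a, b). (x / 2) ^ (a + b) / (fact a * fact b))"
  have f_upper: "besselI_term k x m = f (m, m + k)" for k m
    by (simp add: besselI_term_def f_def mult_2 add.assoc)
  have f_lower: "besselI_term k x m = f (m + k, m)" for k m
    by (simp add: f_upper f_def add.commute mult.commute)
  define D where "D = (\<lambda>m. (m, m)) ` {..<M}"
  define U where "U = (\<lambda>(k, m). (m, m + Suc k)) ` ({..<N} \<times> {..<M})"
  define L where "L = (\<lambda>(k, m). (m + Suc k, m)) ` ({..<N} \<times> {..<M})"
  have "(\<Sum>m<M. besselI_term 0 x m) = sum f D"
    unfolding D_def f_upper by (subst sum.reindex) (auto simp: inj_on_def)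
  moreover have "(\<Sum>k<N. \<Sum>m<M. besselI_term (Suc k) x m) = sum f U"
    unfolding U_def f_upper
    by (subst sum.reindex) (auto simp: inj_on_def sum.cartesian_product intro!: sum.cong)
  moreover have "(\<Sum>k<N. \<Sum>m<M. besselI_term (Suc k) x m) = sum f L"
    unfolding L_def f_lower
    by (subst sum.reindex) (auto simp: inj_on_def sum.cartesian_product intro!: sum.cong)
  moreover have "sum f D + sum f U + sum f L = sum f (D \<union> U \<union> L)"
  proof -
    have "finite D" "finite U" "finite L" "D \<inter> U = {}" "(D \<union> U) \<inter> L = {}"
      unfolding D_def U_def L_def by auto
    then show ?thesis
      by (simp add: sum.union_disjoint)
  qed
  moreover have "\<dots> \<le> sum f ({..<M + N} \<times> {..<M + N})"
    using assms by (intro sum_mono2) (auto simp: f_def D_def U_def L_def)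
  moreover have "\<dots> = (\<Sum>a<M + N. (x / 2) ^ a / fact a) * (\<Sum>b<M + N. (x / 2) ^ b / fact b)"
    by (simp add: sum_product sum.cartesian_product f_def power_add)
  moreover have "\<dots> \<le> exp (x / 2) * exp (x / 2)"
    using assms by (intro mult_mono sum_exp_series_le sum_nonneg) auto
  moreover have "exp (x / 2) * exp (x / 2) = exp x"
    by (simp add: exp_add[symmetric])
  ultimately show ?thesis
    by linarith
qed

lemma
  assumes "0 \<le> x"
  shows summable_besselI_Suc: "summable (\<lambda>k. besselI (Suc k) x)"
    and besselI_0_plus_twice_suminf_le_exp: "besselI 0 x + 2 * (\<Sum>k. besselI (Suc k) x) \<le> exp x"
proof -
  have partial: "besselI 0 x + 2 * (\<Sum>k<N. besselI (Suc k) x) \<le> exp x" for N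
  proof -
    have lim: "(\<lambda>M. (\<Sum>m<M. besselI_term 0 x m) + (\<Sum>k<N. \<Sum>m<M. besselI_term (Suc k) x m)
             + (\<Sum>k<N. \<Sum>m<M. besselI_term (Suc k) x m))
          \<longlonglongrightarrow> besselI 0 x + (\<Sum>k<N. besselI (Suc k) x) + (\<Sum>k<N. besselI (Suc k) x)"
      unfolding besselI_eq_suminf using assms
      by (intro tendsto_add tendsto_sum summable_LIMSEQ summable_besselI_term)
    have "besselI 0 x + (\<Sum>k<N. besselI (Suc k) x) + (\<Sum>k<N. besselI (Suc k) x) \<le> exp x"
      by (rule LIMSEQ_le_const2[OF lim]) (use besselI_partial_sums_le_exp[OF assms] in blast)
    then show ?thesis
      by simp
  qed
  then have bound: "(\<Sum>k<N. besselI (Suc k) x) \<le> (exp x - besselI 0 x) / 2" for N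
    by (simp add: field_simps)
  show summable: "summable (\<lambda>k. besselI (Suc k) x)"
    using assms by (intro summableI_nonneg_bounded[OF besselI_nonneg bound])
  show "besselI 0 x + 2 * (\<Sum>k. besselI (Suc k) x) \<le> exp x"
    using suminf_le_const[OF summable bound] by simp
qed

lemma
  assumes "0 \<le> \<kappa>"
  shows one_le_vm_Z: "1 \<le> vm_Z l \<kappa>"
    and vm_Z_le: "vm_Z l \<kappa> \<le> exp \<kappa> / besselI 0 \<kappa>"
proof -
  have I0: "1 \<le> besselI 0 \<kappa>"
    by (rule one_le_besselI_0[OF assms])
  have nonneg: "0 \<le> besselI (Suc k) \<kappa> * \<bar>cos (real (Suc k) * arccos l)\<bar>" for k
    using besselI_nonneg[OF assms] by simp
  have le: "besselI (Suc k) \<kappa> * \<bar>cos (real (Suc k) * arccos l)\<bar> \<le> besselI (Suc k) \<kappa>" for k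
    using besselI_nonneg[OF assms, of "Suc k"] by (intro mult_left_le) auto
  have summable: "summable (\<lambda>k. besselI (Suc k) \<kappa> * \<bar>cos (real (Suc k) * arccos l)\<bar>)"
    by (rule summable_comparison_test'[OF summable_besselI_Suc[OF assms]]) (use le nonneg in simp)
  show "1 \<le> vm_Z l \<kappa>"
    unfolding vm_Z_def using I0 suminf_nonneg[OF summable nonneg] by simp
  have "vm_Z l \<kappa> \<le> 1 + 2 / besselI 0 \<kappa> * (\<Sum>k. besselI (Suc k) \<kappa>)"
    unfolding vm_Z_def using I0
    by (intro add_left_mono mult_left_mono suminf_le summable summable_besselI_Suc assms le) auto
  also have "\<dots> = (besselI 0 \<kappa> + 2 * (\<Sum>k. besselI (Suc k) \<kappa>)) / besselI 0 \<kappa>"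
    using I0 by (simp add: field_simps)
  also have "\<dots> \<le> exp \<kappa> / besselI 0 \<kappa>"
    using I0 besselI_0_plus_twice_suminf_le_exp[OF assms] by (intro divide_right_mono) auto
  finally show "vm_Z l \<kappa> \<le> exp \<kappa> / besselI 0 \<kappa>" .
qed

text \<open>This is \<open>\<gamma>_k^2 / q_k\<close>;
  where \<open>q_k = 0\<close> it is \<open>0\<close> (as \<open>x / 0 = 0\<close>), consistently with such \<open>k\<close> never being drawn.\<close>

definition vm_weight :: "real \<Rightarrow> real \<Rightarrow> nat \<Rightarrow> real" where
  "vm_weight l \<kappa> k = (vm_gamma l \<kappa> k / vm_q l \<kappa> k)^2 * vm_q l \<kappa> k"

lemma vm_weight_0: "0 \<le> \<kappa> \<Longrightarrow> vm_weight l \<kappa> 0 = vm_Z l \<kappa> / pi^2"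
  using one_le_vm_Z[of \<kappa> l] by (simp add: vm_weight_def vm_gamma_def vm_q_def field_simps power2_eq_square)

lemma vm_weight_le:
  assumes "0 \<le> \<kappa>" and "k \<ge> 1"
  shows "vm_weight l \<kappa> k \<le> 2 * vm_Z l \<kappa> / pi^2 * ((\<kappa> / 2) ^ k / fact k)"
proof -
  define Z where "Z = vm_Z l \<kappa>"
  define r where "r = besselI k \<kappa> / besselI 0 \<kappa>"
  define c where "c = cos (real k * arccos l)"
  have Z: "1 \<le> Z"
    unfolding Z_def by (rule one_le_vm_Z[OF assms(1)])
  have I0: "1 \<le> besselI 0 \<kappa>"
    by (rule one_le_besselI_0[OF assms(1)])
  have r: "0 \<le> r" "r \<le> (\<kappa> / 2) ^ k / fact k"
    unfolding r_def using I0 besselI_nonneg[OF assms(1), of k] besselI_le[OF assms(1), of k]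
    by (simp_all add: divide_le_eq)
  have q: "vm_q l \<kappa> k = 2 / Z * r * \<bar>c\<bar>" and g: "vm_gamma l \<kappa> k = 2 / pi * r * c"
    using assms(2) by (simp_all add: vm_q_def vm_gamma_def Z_def r_def c_def)
  have "vm_weight l \<kappa> k = 2 * Z / pi^2 * r * \<bar>c\<bar>"
    unfolding vm_weight_def q g using Z by (cases "r = 0 \<or> c = 0") (auto simp: field_simps power2_eq_square abs_mult_self_eq)
  also have "\<dots> \<le> 2 * Z / pi^2 * r"
    using Z r by (intro mult_left_le) (auto simp: c_def)
  also have "\<dots> \<le> 2 * Z / pi^2 * ((\<kappa> / 2) ^ k / fact k)"
    using Z r by (intro mult_left_mono) auto
  finally show ?thesis
    by (simp add: Z_def)
qed

lemma suminf_vm_weight_le: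
  assumes "0 \<le> \<kappa>" and "0 \<le> \<alpha>" and "0 \<le> D"
  shows "(\<Sum>k. ennreal (vm_weight l \<kappa> k * (D * \<alpha> ^ k)))
     \<le> ennreal (D * exp \<kappa> / (pi^2 * besselI 0 \<kappa>) * (1 + 2 * exp \<kappa> / besselI 0 \<kappa> * (exp (\<alpha> * \<kappa> / 2) - 1)))"
proof -
  define Z where "Z = vm_Z l \<kappa>"
  define y where "y = \<alpha> * \<kappa> / 2"
  define b where "b k = 2 * Z * D / pi^2 * (y ^ k / fact k) - (if k = 0 then Z * D / pi^2 else 0)" for k
  have Z: "1 \<le> Z" "Z \<le> exp \<kappa> / besselI 0 \<kappa>"
    unfolding Z_def using one_le_vm_Z vm_Z_le assms(1) by auto
  have y: "0 \<le> y"
    unfolding y_def using assms by simp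
  have term_le: "vm_weight l \<kappa> k * (D * \<alpha> ^ k) \<le> b k" for k
  proof (cases "k = 0")
    case True
    then show ?thesis
      using vm_weight_0[OF assms(1)] by (simp add: b_def Z_def ac_simps)
  next
    case False
    have "vm_weight l \<kappa> k * (D * \<alpha> ^ k) \<le> 2 * Z / pi^2 * ((\<kappa> / 2) ^ k / fact k) * (D * \<alpha> ^ k)"
      using vm_weight_le[OF assms(1)] False assms by (intro mult_right_mono) (auto simp: Z_def)
    also have "\<dots> = b k"
      using False by (simp add: b_def y_def power_mult_distrib field_simps)
    finally show ?thesis .
  qed
  have b_nonneg: "0 \<le> b k" for k
    using Z y assms(3) by (simp add: b_def field_simps)
  have "b sums (2 * Z * D / pi^2 * exp y - Z * D / pi^2)"
    unfolding b_def by (intro sums_diff sums_mult exp_series) (use sums_single[of 0 "\<lambda>_. Z * D / pi^2"] in simp)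
  also have "2 * Z * D / pi^2 * exp y - Z * D / pi^2 = Z * D / pi^2 * (1 + 2 * (exp y - 1))"
    by (simp add: field_simps)
  finally have "(\<Sum>k. ennreal (b k)) = ennreal (Z * D / pi^2 * (1 + 2 * (exp y - 1)))"
    by (rule suminf_ennreal_eq[OF b_nonneg])
  also have "\<dots> \<le> ennreal (D * exp \<kappa> / (pi^2 * besselI 0 \<kappa>) * (1 + 2 * exp \<kappa> / besselI 0 \<kappa> * (exp y - 1)))"
  proof (rule ennreal_leI)
    define R where "R = exp \<kappa> / besselI 0 \<kappa>"
    define E where "E = exp y - 1"
    have R: "Z \<le> R" "1 \<le> R" and E: "0 \<le> E"
      using Z y by (auto simp: R_def E_def)
    have "Z * D / pi^2 * (1 + 2 * E) \<le> R * D / pi^2 * (1 + 2 * E)"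
      using R assms E by (intro mult_right_mono divide_right_mono) auto
    also have "\<dots> \<le> R * D / pi^2 * (1 + 2 * (R * E))"
      using R assms mult_right_mono[OF R(2) E] by (intro mult_left_mono) auto
    finally show "Z * D / pi^2 * (1 + 2 * (exp y - 1))
        \<le> D * exp \<kappa> / (pi^2 * besselI 0 \<kappa>) * (1 + 2 * exp \<kappa> / besselI 0 \<kappa> * (exp y - 1))"
      by (simp add: R_def E_def ac_simps)
  qed
  finally have "(\<Sum>k. ennreal (b k)) \<le> ennreal (D * exp \<kappa> / (pi^2 * besselI 0 \<kappa>)
      * (1 + 2 * exp \<kappa> / besselI 0 \<kappa> * (exp (\<alpha> * \<kappa> / 2) - 1)))"
    by (simp add: y_def)
  moreover have "(\<Sum>k. ennreal (vm_weight l \<kappa> k * (D * \<alpha> ^ k))) \<le> (\<Sum>k. ennreal (b k))"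
    by (intro suminf_le ennreal_leI term_le) auto
  ultimately show ?thesis
    by (rule order_trans[rotated])
qed

lemma
  fixes a b :: ennreal
  assumes "4 * a + 2 * b + 1 \<le> ennreal \<alpha>"
  shows one_le_of_moment_bound: "1 \<le> \<alpha>"
    and le_of_moment_bound: "a \<le> ennreal \<alpha>"
proof -
  have "(1::ennreal) \<le> 4 * a + 2 * b + 1"
    by (simp add: add_increasing)
  then have "1 \<le> ennreal \<alpha>"
    using assms by (rule order_trans)
  then show "1 \<le> \<alpha>"
    by simp
  have "a \<le> 4 * a"
    using mult_right_mono[of 1 4 a] by simp
  also have "\<dots> \<le> 4 * a + 2 * b + 1"
    by (simp add: add.assoc add_increasing2)
  finally show "a \<le> ennreal \<alpha>"
    using assms by (rule order_trans)
qed

lemma ennreal_two_step_recurrence_le: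
  fixes m a1 a2 :: "nat \<Rightarrow> ennreal" and \<alpha> c :: ennreal
  assumes "m 0 \<le> c" and "m 1 \<le> \<alpha> * c"
    and coeff: "\<And>k. 4 * a2 k + 2 * a1 k + 1 \<le> \<alpha>"
    and rec: "\<And>k. m (Suc (Suc k)) \<le> 4 * (a2 k * m (Suc k)) + 2 * (a1 k * m (Suc k)) + 2 * (a1 k * m k) + m k"
  shows "m k \<le> \<alpha> ^ k * c"
proof (induction k rule: induct_nat_012)
  case (ge2 k)
  have "m (Suc (Suc k)) \<le> 4 * (a2 k * (\<alpha> ^ Suc k * c)) + 2 * (a1 k * (\<alpha> ^ Suc k * c))
      + 2 * (a1 k * (\<alpha> ^ k * c)) + \<alpha> ^ k * c"
    using rec[of k] ge2 by (elim order_trans) (intro add_mono mult_left_mono order_refl; simp)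
  also have "\<dots> = (4 * a2 k + 2 * a1 k) * (\<alpha> ^ Suc k * c) + (2 * a1 k + 1) * (\<alpha> ^ k * c)"
    by (simp add: algebra_simps)
  also have "\<dots> \<le> (4 * a2 k + 2 * a1 k) * (\<alpha> ^ Suc k * c) + \<alpha> * (\<alpha> ^ k * c)"
    using coeff[of k] by (intro add_left_mono mult_right_mono) (auto elim: order_trans[rotated] intro: add_increasing)
  also have "\<dots> = (4 * a2 k + 2 * a1 k + 1) * (\<alpha> ^ Suc k * c)"
    by (simp add: algebra_simps)
  also have "\<dots> \<le> \<alpha> ^ Suc (Suc k) * c"
    using coeff[of k] by (simp add: mult_right_mono mult.assoc)
  finally show ?case .
qed (use assms in simp_all)

context prob_space
begin

lemma indep_var_nn_integral_mult:
  fixes X Y :: "'a \<Rightarrow> ennreal"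
  assumes "indep_var borel X borel Y"
  shows "(\<integral>\<^sup>+\<omega>. X \<omega> * Y \<omega> \<partial>M) = (\<integral>\<^sup>+\<omega>. X \<omega> \<partial>M) * (\<integral>\<^sup>+\<omega>. Y \<omega> \<partial>M)"
proof -
  have "case_bool (borel :: ennreal measure) borel = (\<lambda>_. borel)"
    by (rule ext) (simp split: bool.split)
  then have "indep_vars (\<lambda>_. borel) (case_bool X Y) UNIV"
    using assms unfolding indep_var_def by simp
  from indep_vars_nn_integral[OF _ this] show ?thesis
    by (simp add: UNIV_bool mult.commute)
qed

lemma indep_varI_prob:
  assumes X: "random_variable S X" and Y: "random_variable T Y"
    and prob_Int: "\<And>A B. A \<in> sets S \<Longrightarrow> B \<in> sets T \<Longrightarrow>
      prob {\<omega> \<in> space M. X \<omega> \<in> A \<and> Y \<omega> \<in> B}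
        = prob {\<omega> \<in> space M. X \<omega> \<in> A} * prob {\<omega> \<in> space M. Y \<omega> \<in> B}"
  shows "indep_var S X T Y"
proof -
  have preimages: "sigma_sets (space M) {Z -` A \<inter> space M | A. A \<in> sets R} = {Z -` A \<inter> space M | A. A \<in> sets R}"
    if "random_variable R Z" for R and Z :: "'a \<Rightarrow> 'b"
    using sigma_sets_vimage_commute[of Z "space M" "space R" "sets R"] measurable_space[OF that]
    by (auto simp: sets.sigma_sets_eq)
  have "prob ((X -` A \<inter> space M) \<inter> (Y -` B \<inter> space M))
      = prob (X -` A \<inter> space M) * prob (Y -` B \<inter> space M)" if "A \<in> sets S" "B \<in> sets T" for A B
  proof -
    have "(X -` A \<inter> space M) \<inter> (Y -` B \<inter> space M) = {\<omega> \<in> space M. X \<omega> \<in> A \<and> Y \<omega> \<in> B}"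
      "X -` A \<inter> space M = {\<omega> \<in> space M. X \<omega> \<in> A}" "Y -` B \<inter> space M = {\<omega> \<in> space M. Y \<omega> \<in> B}"
      by auto
    then show ?thesis
      using prob_Int[OF that] by simp
  qed
  moreover have "{Z -` A \<inter> space M | A. A \<in> sets R} \<subseteq> events" if "random_variable R Z" for R and Z :: "'a \<Rightarrow> 'b"
    using measurable_sets[OF that] by blast
  ultimately show ?thesis
    unfolding indep_var_eq indep_sets2_eq preimages[OF X] preimages[OF Y] using X Y
    by blast
qed

lemma nn_integral_indicator_mult_indep:
  fixes K :: "'a \<Rightarrow> nat" and Y :: "'a \<Rightarrow> 'b" and H :: "'b \<Rightarrow> ennreal"
  assumes K[measurable]: "K \<in> measurable M (count_space UNIV)" and Y[measurable]: "Y \<in> measurable M N"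
    and indep: "\<And>S E. E \<in> sets N \<Longrightarrow> prob {\<omega> \<in> space M. K \<omega> \<in> S \<and> Y \<omega> \<in> E}
      = prob {\<omega> \<in> space M. K \<omega> \<in> S} * prob {\<omega> \<in> space M. Y \<omega> \<in> E}"
    and H[measurable]: "H \<in> borel_measurable N"
  shows "(\<integral>\<^sup>+\<omega>. indicator {k} (K \<omega>) * H (Y \<omega>) \<partial>M) = ennreal (prob {\<omega> \<in> space M. K \<omega> = k}) * (\<integral>\<^sup>+\<omega>. H (Y \<omega>) \<partial>M)"
proof -
  have "indep_var borel (\<lambda>\<omega>. indicator {k} (K \<omega>)) borel (\<lambda>\<omega>. H (Y \<omega>))"
  proof (rule indep_varI_prob)
    show "random_variable borel (\<lambda>\<omega>. indicator {k} (K \<omega>) :: ennreal)"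
      using measurable_compose[OF K borel_measurable_count_space] .
    show "random_variable borel (\<lambda>\<omega>. H (Y \<omega>))"
      by measurable
    fix A B :: "ennreal set"
    assume "B \<in> sets borel"
    then have E: "H -` B \<inter> space N \<in> sets N"
      by measurable
    let ?S = "{n. indicator {k} n \<in> A}" and ?E = "H -` B \<inter> space N"
    have "prob {\<omega> \<in> space M. indicator {k} (K \<omega>) \<in> A \<and> H (Y \<omega>) \<in> B}
        = prob {\<omega> \<in> space M. K \<omega> \<in> ?S \<and> Y \<omega> \<in> ?E}"
      using measurable_space[OF Y] by (intro arg_cong[where f=prob]) auto
    also have "\<dots> = prob {\<omega> \<in> space M. K \<omega> \<in> ?S} * prob {\<omega> \<in> space M. Y \<omega> \<in> ?E}"
      by (rule indep[OF E])
    also have "{\<omega> \<in> space M. K \<omega> \<in> ?S} = {\<omega> \<in> space M. indicator {k} (K \<omega>) \<in> A}"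
      by simp
    also have "{\<omega> \<in> space M. Y \<omega> \<in> ?E} = {\<omega> \<in> space M. H (Y \<omega>) \<in> B}"
      using measurable_space[OF Y] by auto
    finally show "prob {\<omega> \<in> space M. indicator {k} (K \<omega>) \<in> A \<and> H (Y \<omega>) \<in> B}
        = prob {\<omega> \<in> space M. indicator {k} (K \<omega>) \<in> A} * prob {\<omega> \<in> space M. H (Y \<omega>) \<in> B}" .
  qed
  then have "(\<integral>\<^sup>+\<omega>. indicator {k} (K \<omega>) * H (Y \<omega>) \<partial>M)
      = (\<integral>\<^sup>+\<omega>. indicator {k} (K \<omega>) \<partial>M) * (\<integral>\<^sup>+\<omega>. H (Y \<omega>) \<partial>M)"
    by (rule indep_var_nn_integral_mult)
  also have "(\<integral>\<^sup>+\<omega>. indicator {k} (K \<omega>) \<partial>M) = (\<integral>\<^sup>+\<omega>. indicator {\<omega> \<in> space M. K \<omega> = k} \<omega> \<partial>M)"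
    by (intro nn_integral_cong) (simp split: split_indicator)
  also have "\<dots> = ennreal (prob {\<omega> \<in> space M. K \<omega> = k})"
    by (simp add: emeasure_eq_measure)
  finally show ?thesis .
qed

lemma nn_integral_random_index:
  fixes K :: "'a \<Rightarrow> nat" and Y :: "'a \<Rightarrow> 'b" and H :: "nat \<Rightarrow> 'b \<Rightarrow> ennreal"
  assumes K[measurable]: "K \<in> measurable M (count_space UNIV)" and Y[measurable]: "Y \<in> measurable M N"
    and indep: "\<And>S E. E \<in> sets N \<Longrightarrow> prob {\<omega> \<in> space M. K \<omega> \<in> S \<and> Y \<omega> \<in> E}
      = prob {\<omega> \<in> space M. K \<omega> \<in> S} * prob {\<omega> \<in> space M. Y \<omega> \<in> E}"
    and H[measurable]: "\<And>k. H k \<in> borel_measurable N"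
  shows "(\<integral>\<^sup>+\<omega>. H (K \<omega>) (Y \<omega>) \<partial>M) = (\<Sum>k. ennreal (prob {\<omega> \<in> space M. K \<omega> = k}) * (\<integral>\<^sup>+\<omega>. H k (Y \<omega>) \<partial>M))"
proof -
  have [measurable]: "(\<lambda>\<omega>. indicator {k} (K \<omega>) :: ennreal) \<in> borel_measurable M" for k
    using measurable_compose[OF K borel_measurable_count_space] .
  have "(\<integral>\<^sup>+\<omega>. H (K \<omega>) (Y \<omega>) \<partial>M) = (\<integral>\<^sup>+\<omega>. (\<Sum>k. indicator {k} (K \<omega>) * H k (Y \<omega>)) \<partial>M)"
  proof (intro nn_integral_cong)
    fix \<omega>
    have "(\<lambda>k. indicator {k} (K \<omega>) * H k (Y \<omega>)) = (\<lambda>k. if k = K \<omega> then H (K \<omega>) (Y \<omega>) else 0)"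
      by (auto simp: fun_eq_iff)
    then show "H (K \<omega>) (Y \<omega>) = (\<Sum>k. indicator {k} (K \<omega>) * H k (Y \<omega>))"
      using sums_unique[OF sums_single[of "K \<omega>" "\<lambda>_. H (K \<omega>) (Y \<omega>)"]] by simp
  qed
  also have "\<dots> = (\<Sum>k. \<integral>\<^sup>+\<omega>. indicator {k} (K \<omega>) * H k (Y \<omega>) \<partial>M)"
    by (rule nn_integral_suminf) measurable
  also have "\<dots> = (\<Sum>k. ennreal (prob {\<omega> \<in> space M. K \<omega> = k}) * (\<integral>\<^sup>+\<omega>. H k (Y \<omega>) \<partial>M))"
    using nn_integral_indicator_mult_indep[OF K Y indep H] by simp
  finally show ?thesis .
qed

lemma nn_integral_indep_vars_restrict_mult:
  fixes X :: "'i \<Rightarrow> 'a \<Rightarrow> 'b" and f :: "'b \<Rightarrow> ennreal" and g :: "('i \<Rightarrow> 'b) \<Rightarrow> ennreal"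
  assumes indep: "indep_vars (\<lambda>_. N) X I" and "j \<in> I" "J \<subseteq> I" "j \<notin> J"
    and f: "f \<in> borel_measurable N" and g: "g \<in> borel_measurable (PiM J (\<lambda>_. N))"
  shows "(\<integral>\<^sup>+\<omega>. f (X j \<omega>) * g (restrict (\<lambda>i. X i \<omega>) J) \<partial>M)
       = (\<integral>\<^sup>+\<omega>. f (X j \<omega>) \<partial>M) * (\<integral>\<^sup>+\<omega>. g (restrict (\<lambda>i. X i \<omega>) J) \<partial>M)"
proof -
  have "indep_var (PiM {j} (\<lambda>_. N)) (\<lambda>\<omega>. restrict (\<lambda>i. X i \<omega>) {j})
      (PiM J (\<lambda>_. N)) (\<lambda>\<omega>. restrict (\<lambda>i. X i \<omega>) J)"
    using assms by (intro indep_var_restrict[OF indep]) auto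
  moreover have "(\<lambda>y. f (y j)) \<in> borel_measurable (PiM {j} (\<lambda>_. N))"
    using measurable_compose[OF measurable_component_singleton[of j "{j}" "\<lambda>_. N"] f] by simp
  ultimately have "indep_var borel ((\<lambda>y. f (y j)) \<circ> (\<lambda>\<omega>. restrict (\<lambda>i. X i \<omega>) {j}))
      borel (g \<circ> (\<lambda>\<omega>. restrict (\<lambda>i. X i \<omega>) J))"
    using g by (intro indep_var_compose)
  then show ?thesis
    by (simp add: indep_var_nn_integral_mult comp_def)
qed

lemma nn_integral_mult_power2_norm_chebT_indep:
  fixes A :: "nat \<Rightarrow> 'a \<Rightarrow> real^'n^'n" and f :: "real^'n^'n \<Rightarrow> real"
  assumes indep: "indep_vars (\<lambda>_. borel) A {1..}" and "i < j"
    and f[measurable]: "f \<in> borel_measurable borel"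
  shows "(\<integral>\<^sup>+\<omega>. ennreal (f (A j \<omega>)) * ennreal ((norm (chebT (\<lambda>j. A j \<omega>) i))^2) \<partial>M)
    = (\<integral>\<^sup>+\<omega>. ennreal (f (A j \<omega>)) \<partial>M) * (\<integral>\<^sup>+\<omega>. ennreal ((norm (chebT (\<lambda>j. A j \<omega>) i))^2) \<partial>M)"
proof -
  have "(\<lambda>y. chebT y i) \<in> borel_measurable (PiM {1..<j} (\<lambda>_. borel))"
    using assms by (intro borel_measurable_chebT measurable_component_singleton) auto
  then have "(\<lambda>y. ennreal ((norm (chebT y i))^2)) \<in> borel_measurable (PiM {1..<j} (\<lambda>_. borel))"
    by measurable
  moreover have "{1..<j} \<subseteq> {1..}" "j \<in> {1..}"
    using assms by auto
  ultimately have "(\<integral>\<^sup>+\<omega>. ennreal (f (A j \<omega>)) * ennreal ((norm (chebT (restrict (\<lambda>j. A j \<omega>) {1..<j}) i))^2) \<partial>M)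
    = (\<integral>\<^sup>+\<omega>. ennreal (f (A j \<omega>)) \<partial>M)
      * (\<integral>\<^sup>+\<omega>. ennreal ((norm (chebT (restrict (\<lambda>j. A j \<omega>) {1..<j}) i))^2) \<partial>M)"
    by (intro nn_integral_indep_vars_restrict_mult[OF indep]) auto
  moreover have "chebT (restrict (\<lambda>j. A j \<omega>) {1..<j}) i = chebT (\<lambda>j. A j \<omega>) i" for \<omega>
    using assms by (intro chebT_restrict) auto
  ultimately show ?thesis
    by simp
qed

lemma nn_integral_power2_norm_chebT_Suc_Suc_le:
  fixes A :: "nat \<Rightarrow> 'a \<Rightarrow> real^'n^'n" and k :: nat
  assumes indep: "indep_vars (\<lambda>_. borel) A {1..}"
  defines "t \<equiv> \<lambda>i \<omega>. ennreal ((norm (chebT (\<lambda>j. A j \<omega>) i))^2)"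
    and "a1 \<equiv> \<integral>\<^sup>+\<omega>. ennreal (spec_norm (A (k + 2) \<omega>)) \<partial>M"
    and "a2 \<equiv> \<integral>\<^sup>+\<omega>. ennreal ((spec_norm (A (k + 2) \<omega>))^2) \<partial>M"
  shows "integral\<^sup>N M (t (Suc (Suc k)))
    \<le> 4 * (a2 * integral\<^sup>N M (t (Suc k))) + 2 * (a1 * integral\<^sup>N M (t (Suc k)))
      + 2 * (a1 * integral\<^sup>N M (t k)) + integral\<^sup>N M (t k)"
proof -
  have A: "A j \<in> borel_measurable M" if "1 \<le> j" for j
    using indep that by (simp add: indep_vars_def)
  have [measurable]: "A (Suc (Suc k)) \<in> borel_measurable M"
    by (simp add: A)
  have [measurable]: "(\<lambda>\<omega>. chebT (\<lambda>j. A j \<omega>) i) \<in> borel_measurable M" for i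
    by measurable (simp add: A)
  have "t (Suc (Suc k)) \<omega>
      \<le> 4 * (ennreal ((spec_norm (A (k + 2) \<omega>))^2) * t (Suc k) \<omega>) + 2 * (ennreal (spec_norm (A (k + 2) \<omega>)) * t (Suc k) \<omega>)
        + 2 * (ennreal (spec_norm (A (k + 2) \<omega>)) * t k \<omega>) + t k \<omega>" for \<omega>
  proof -
    have "t (Suc (Suc k)) \<omega> \<le> ennreal (4 * (spec_norm (A (k + 2) \<omega>))^2 * (norm (chebT (\<lambda>j. A j \<omega>) (Suc k)))^2
        + 2 * spec_norm (A (k + 2) \<omega>) * (norm (chebT (\<lambda>j. A j \<omega>) (Suc k)))^2
        + 2 * spec_norm (A (k + 2) \<omega>) * (norm (chebT (\<lambda>j. A j \<omega>) k))^2 + (norm (chebT (\<lambda>j. A j \<omega>) k))^2)"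
      unfolding t_def by (intro ennreal_leI power2_norm_chebT_Suc_Suc_le)
    also have "\<dots> = 4 * (ennreal ((spec_norm (A (k + 2) \<omega>))^2) * t (Suc k) \<omega>) + 2 * (ennreal (spec_norm (A (k + 2) \<omega>)) * t (Suc k) \<omega>)
        + 2 * (ennreal (spec_norm (A (k + 2) \<omega>)) * t k \<omega>) + t k \<omega>"
      by (simp add: t_def spec_norm_nonneg ennreal_plus ennreal_mult[symmetric] ennreal_mult'[symmetric]
          ennreal_numeral[symmetric] mult.assoc del: ennreal_numeral)
    finally show ?thesis .
  qed
  then have "integral\<^sup>N M (t (Suc (Suc k))) \<le> (\<integral>\<^sup>+\<omega>. 4 * (ennreal ((spec_norm (A (k + 2) \<omega>))^2) * t (Suc k) \<omega>)
      + 2 * (ennreal (spec_norm (A (k + 2) \<omega>)) * t (Suc k) \<omega>) + 2 * (ennreal (spec_norm (A (k + 2) \<omega>)) * t k \<omega>) + t k \<omega> \<partial>M)"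
    by (intro nn_integral_mono)
  also have "\<dots> = 4 * (a2 * integral\<^sup>N M (t (Suc k))) + 2 * (a1 * integral\<^sup>N M (t (Suc k)))
      + 2 * (a1 * integral\<^sup>N M (t k)) + integral\<^sup>N M (t k)"
    using nn_integral_mult_power2_norm_chebT_indep[OF indep, of "Suc k" "k + 2" "\<lambda>B. (spec_norm B)^2"]
      nn_integral_mult_power2_norm_chebT_indep[OF indep, of "Suc k" "k + 2" spec_norm]
      nn_integral_mult_power2_norm_chebT_indep[OF indep, of k "k + 2" spec_norm]
    by (simp add: nn_integral_add nn_integral_cmult a1_def a2_def t_def)
  finally show ?thesis .
qed

lemma nn_integral_power2_norm_chebT_le:
  fixes A :: "nat \<Rightarrow> 'a \<Rightarrow> real^'n^'n"
  assumes indep: "indep_vars (\<lambda>_. borel) A {1..}"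
    and moments: "\<And>k. k \<ge> 1 \<Longrightarrow> 4 * (\<integral>\<^sup>+\<omega>. ennreal ((spec_norm (A k \<omega>))^2) \<partial>M)
      + 2 * (\<integral>\<^sup>+\<omega>. ennreal (spec_norm (A k \<omega>)) \<partial>M) + 1 \<le> ennreal \<alpha>"
  shows "(\<integral>\<^sup>+\<omega>. ennreal ((norm (chebT (\<lambda>j. A j \<omega>) k))^2) \<partial>M) \<le> ennreal (real CARD('n) * \<alpha> ^ k)"
proof -
  define D where "D = real CARD('n)"
  have \<alpha>: "1 \<le> \<alpha>"
    by (rule one_le_of_moment_bound[OF moments[OF order_refl]])
  have [measurable]: "A 1 \<in> borel_measurable M"
    using indep by (simp add: indep_vars_def)
  have "(\<integral>\<^sup>+\<omega>. ennreal ((norm (chebT (\<lambda>j. A j \<omega>) k))^2) \<partial>M) \<le> ennreal \<alpha> ^ k * ennreal D"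
  proof (rule ennreal_two_step_recurrence_le[where m="\<lambda>i. \<integral>\<^sup>+\<omega>. ennreal ((norm (chebT (\<lambda>j. A j \<omega>) i))^2) \<partial>M"])
    show "(\<integral>\<^sup>+\<omega>. ennreal ((norm (chebT (\<lambda>j. A j \<omega>) 0))^2) \<partial>M) \<le> ennreal D"
      by (simp add: D_def power2_norm_mat_1 emeasure_space_1)
    have "(\<integral>\<^sup>+\<omega>. ennreal ((norm (A 1 \<omega>))^2) \<partial>M) \<le> (\<integral>\<^sup>+\<omega>. ennreal D * ennreal ((spec_norm (A 1 \<omega>))^2) \<partial>M)"
      by (intro nn_integral_mono) (simp add: D_def power2_norm_le_spec_norm ennreal_leI flip: ennreal_mult)
    also have "\<dots> = ennreal D * (\<integral>\<^sup>+\<omega>. ennreal ((spec_norm (A 1 \<omega>))^2) \<partial>M)"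
      by (rule nn_integral_cmult) measurable
    also have "\<dots> \<le> ennreal D * ennreal \<alpha>"
      by (rule mult_left_mono[OF le_of_moment_bound[OF moments[OF order_refl]]]) simp
    finally show "(\<integral>\<^sup>+\<omega>. ennreal ((norm (chebT (\<lambda>j. A j \<omega>) 1))^2) \<partial>M) \<le> ennreal \<alpha> * ennreal D"
      by (simp add: mult.commute[of "ennreal D"])
    show "4 * (\<integral>\<^sup>+\<omega>. ennreal ((spec_norm (A (k + 2) \<omega>))^2) \<partial>M) + 2 * (\<integral>\<^sup>+\<omega>. ennreal (spec_norm (A (k + 2) \<omega>)) \<partial>M) + 1
        \<le> ennreal \<alpha>" for k
      by (rule moments) simp
  qed (rule nn_integral_power2_norm_chebT_Suc_Suc_le[OF indep])
  also have "ennreal \<alpha> ^ k * ennreal D = ennreal (D * \<alpha> ^ k)"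
    using \<alpha> by (simp add: ennreal_power ennreal_mult[symmetric] mult.commute[of D] D_def)
  finally show ?thesis
    by (simp add: D_def)
qed

lemma nn_integral_power2_norm_chebT_random_index_le:
  fixes A :: "nat \<Rightarrow> 'a \<Rightarrow> real^'n^'n" and K :: "'a \<Rightarrow> nat" and r :: "nat \<Rightarrow> real"
  assumes indep: "indep_vars (\<lambda>_. borel) A {1..}"
    and moments: "\<And>k. k \<ge> 1 \<Longrightarrow> 4 * (\<integral>\<^sup>+\<omega>. ennreal ((spec_norm (A k \<omega>))^2) \<partial>M)
      + 2 * (\<integral>\<^sup>+\<omega>. ennreal (spec_norm (A k \<omega>)) \<partial>M) + 1 \<le> ennreal \<alpha>"
    and K: "K \<in> measurable M (count_space UNIV)"
    and K_indep: "\<And>S E. E \<in> sets (PiM {1..} (\<lambda>_. borel)) \<Longrightarrow>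
      prob {\<omega> \<in> space M. K \<omega> \<in> S \<and> restrict (\<lambda>j. A j \<omega>) {1..} \<in> E}
        = prob {\<omega> \<in> space M. K \<omega> \<in> S} * prob {\<omega> \<in> space M. restrict (\<lambda>j. A j \<omega>) {1..} \<in> E}"
  shows "(\<integral>\<^sup>+\<omega>. ennreal ((norm (r (K \<omega>) *\<^sub>R chebT (\<lambda>j. A j \<omega>) (K \<omega>)))^2) \<partial>M)
    \<le> (\<Sum>k. ennreal ((r k)^2 * prob {\<omega> \<in> space M. K \<omega> = k} * (real CARD('n) * \<alpha> ^ k)))"
proof -
  define H where "H k y = ennreal ((norm (r k *\<^sub>R chebT y k))^2)" for k and y :: "nat \<Rightarrow> real^'n^'n"
  have \<alpha>: "0 \<le> \<alpha>"
    using one_le_of_moment_bound[OF moments[OF order_refl]] by simp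
  have [measurable]: "A j \<in> borel_measurable M" if "1 \<le> j" for j
    using indep that by (simp add: indep_vars_def)
  have H: "H k \<in> borel_measurable (PiM {1..} (\<lambda>_. borel))" for k
    unfolding H_def by measurable
  have "(\<integral>\<^sup>+\<omega>. ennreal ((norm (r (K \<omega>) *\<^sub>R chebT (\<lambda>j. A j \<omega>) (K \<omega>)))^2) \<partial>M)
      = (\<integral>\<^sup>+\<omega>. H (K \<omega>) (restrict (\<lambda>j. A j \<omega>) {1..}) \<partial>M)"
    by (intro nn_integral_cong) (simp add: H_def chebT_restrict)
  also have "\<dots> = (\<Sum>k. ennreal (prob {\<omega> \<in> space M. K \<omega> = k}) * (\<integral>\<^sup>+\<omega>. H k (restrict (\<lambda>j. A j \<omega>) {1..}) \<partial>M))"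
    by (rule nn_integral_random_index[OF K _ K_indep H]) (simp add: measurable_restrict)
  also have "\<dots> \<le> (\<Sum>k. ennreal ((r k)^2 * prob {\<omega> \<in> space M. K \<omega> = k} * (real CARD('n) * \<alpha> ^ k)))"
  proof (intro suminf_le)
    fix k
    have "(\<integral>\<^sup>+\<omega>. H k (restrict (\<lambda>j. A j \<omega>) {1..}) \<partial>M)
        = ennreal ((r k)^2) * (\<integral>\<^sup>+\<omega>. ennreal ((norm (chebT (\<lambda>j. A j \<omega>) k))^2) \<partial>M)"
      by (simp add: H_def chebT_restrict power_mult_distrib ennreal_mult nn_integral_cmult)
    also have "\<dots> \<le> ennreal ((r k)^2) * ennreal (real CARD('n) * \<alpha> ^ k)"
      by (intro mult_left_mono nn_integral_power2_norm_chebT_le[OF indep moments]) auto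
    finally have "ennreal (prob {\<omega> \<in> space M. K \<omega> = k}) * (\<integral>\<^sup>+\<omega>. H k (restrict (\<lambda>j. A j \<omega>) {1..}) \<partial>M)
        \<le> ennreal (prob {\<omega> \<in> space M. K \<omega> = k}) * (ennreal ((r k)^2) * ennreal (real CARD('n) * \<alpha> ^ k))"
      by (rule mult_left_mono) simp
    also have "\<dots> = ennreal ((r k)^2 * prob {\<omega> \<in> space M. K \<omega> = k} * (real CARD('n) * \<alpha> ^ k))"
      using \<alpha> by (simp add: ennreal_mult[symmetric] mult_ac)
    finally show "ennreal (prob {\<omega> \<in> space M. K \<omega> = k}) * (\<integral>\<^sup>+\<omega>. H k (restrict (\<lambda>j. A j \<omega>) {1..}) \<partial>M)
        \<le> ennreal ((r k)^2 * prob {\<omega> \<in> space M. K \<omega> = k} * (real CARD('n) * \<alpha> ^ k))" .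
  qed auto
  finally show ?thesis .
qed

end

theorem mainTheorem7:
  fixes M :: "'a measure"
    and A :: "real^'n^'n"
    and Ahat :: "nat \<Rightarrow> 'a \<Rightarrow> real^'n^'n"
    and K :: "'a \<Rightarrow> nat"
    and \<alpha> l \<kappa> :: real
  assumes "prob_space M"
    and "transpose A = A"
    and "prob_space.indep_vars M (\<lambda>_. borel) Ahat {1..}"
    and "\<And>j r c. j \<ge> 1 \<Longrightarrow> integrable M (\<lambda>\<omega>. Ahat j \<omega> $ r $ c)"
    and "\<And>j r c. j \<ge> 1 \<Longrightarrow> prob_space.expectation M (\<lambda>\<omega>. Ahat j \<omega> $ r $ c) = A $ r $ c"
    and "\<And>k. k \<ge> 1 \<Longrightarrow>
          4 * (\<integral>\<^sup>+ \<omega>. ennreal ((spec_norm (Ahat k \<omega>))^2) \<partial>M)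
          + 2 * (\<integral>\<^sup>+ \<omega>. ennreal (spec_norm (Ahat k \<omega>)) \<partial>M) + 1 \<le> ennreal \<alpha>"
    and "-1 < l" and "l < 1" and "\<kappa> > 0"
    and "K \<in> measurable M (count_space UNIV)"
    and "\<And>S E. E \<in> sets (PiM {1..} (\<lambda>_. borel)) \<Longrightarrow>
          measure M {\<omega> \<in> space M. K \<omega> \<in> S \<and> restrict (\<lambda>j. Ahat j \<omega>) {1..} \<in> E}
          = measure M {\<omega> \<in> space M. K \<omega> \<in> S}
            * measure M {\<omega> \<in> space M. restrict (\<lambda>j. Ahat j \<omega>) {1..} \<in> E}"
    and "\<And>k. measure M {\<omega> \<in> space M. K \<omega> = k} = vm_q l \<kappa> k"
  shows "(\<integral>\<^sup>+ \<omega>. ennreal ((frob_norm ((vm_gamma l \<kappa> (K \<omega>) / vm_q l \<kappa> (K \<omega>))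
             *\<^sub>R chebT (\<lambda>j. Ahat j \<omega>) (K \<omega>)))^2) \<partial>M)
         \<le> ennreal (real CARD('n) * exp \<kappa> / (pi^2 * besselI 0 \<kappa>)
             * (1 + 2 * exp \<kappa> / besselI 0 \<kappa> * (exp (\<alpha> * \<kappa> / 2) - 1)))"
proof -
  interpret prob_space M by fact
  have \<alpha>: "0 \<le> \<alpha>"
    using one_le_of_moment_bound[OF assms(6)[OF order_refl]] by simp
  have "(\<integral>\<^sup>+\<omega>. ennreal ((frob_norm ((vm_gamma l \<kappa> (K \<omega>) / vm_q l \<kappa> (K \<omega>))
      *\<^sub>R chebT (\<lambda>j. Ahat j \<omega>) (K \<omega>)))^2) \<partial>M)
    \<le> (\<Sum>k. ennreal (vm_weight l \<kappa> k * (real CARD('n) * \<alpha> ^ k)))"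
    unfolding frob_norm_eq_norm vm_weight_def
    using nn_integral_power2_norm_chebT_random_index_le[OF assms(3,6,10,11),
        where r="\<lambda>k. vm_gamma l \<kappa> k / vm_q l \<kappa> k"]
    by (simp only: assms(12))
  also have "\<dots> \<le> ennreal (real CARD('n) * exp \<kappa> / (pi^2 * besselI 0 \<kappa>)
      * (1 + 2 * exp \<kappa> / besselI 0 \<kappa> * (exp (\<alpha> * \<kappa> / 2) - 1)))"
    using assms(9) \<alpha> by (intro suminf_vm_weight_le) auto
  finally show ?thesis .
qed

end
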